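(* Let $\pi_2$ be the five-dimensional complex associative algebra with basis $e_1,\dots,e_5$ and nonzero products $e_1e_1=e_2$, $e_1e_2=e_2e_1=e_3$, $e_1e_4=e_4e_1=e_5$, $e_4e_4=e_5$ (all other products of basis elements are zero). The group $LocAut(\pi_2)$ of all local automorphisms of $\pi_2$ satisfies $$LocAut(\pi_2)=\{\exp(\nabla):\nabla\in LocDer(\pi_2)\},$$ where $LocDer(\pi_2)$ is the set of all local derivations of $\pi_2$ and $\exp(\nabla)=I+\sum_{n=1}^\infty \frac{\nabla^n}{n!}$, with $I$ the identity map of $\pi_2$.
   Context: An automorphism is a bijective linear map $\Phi$ with $\Phi(xy)=\Phi(x)\Phi(y)$; a linear map $\Phi$ is a local automorphism if for every $\nu$ there is an automorphism $\varphi_\nu$ with $\Phi(\nu)=\varphi_\nu(\nu)$. A derivation is a linear map $D$ with $D(xy)=D(x)y+xD(y)$; a linear map $\nabla$ is a local derivation if for every $x$ there is a derivation $D_x$ with $\nabla(x)=D_x(x)$. Local automorphisms of a finite-dimensional algebra form a group under composition. *)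

theory Defs
  imports "HOL-Analysis.Analysis"
begin

text \<open>The algebra pi2 is modelled on complex^5; coordinate k (k = 1..5) of a vector
  is its coefficient at the basis vector e_k (in the numeral type 5 the index 5 is
  the fifth element, distinct from 1..4).\<close>

type_synonym pi2 = "complex ^ 5"

definition pi2_mult :: "pi2 \<Rightarrow> pi2 \<Rightarrow> pi2" where
  "pi2_mult x y = (\<chi> k.
      if k = 2 then x$1 * y$1
      else if k = 3 then x$1 * y$2 + x$2 * y$1
      else if k = 5 then x$1 * y$4 + x$4 * y$1 + x$4 * y$4
      else 0)"

definition clinear :: "(pi2 \<Rightarrow> pi2) \<Rightarrow> bool" where
  "clinear f \<longleftrightarrow> Vector_Spaces.linear (*s) (*s) f"

definition is_aut :: "(pi2 \<Rightarrow> pi2) \<Rightarrow> bool" where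
  "is_aut \<Phi> \<longleftrightarrow> clinear \<Phi> \<and> bij \<Phi> \<and> (\<forall>x y. \<Phi> (pi2_mult x y) = pi2_mult (\<Phi> x) (\<Phi> y))"

definition local_aut :: "(pi2 \<Rightarrow> pi2) \<Rightarrow> bool" where
  "local_aut \<Phi> \<longleftrightarrow> clinear \<Phi> \<and> (\<forall>v. \<exists>\<phi>. is_aut \<phi> \<and> \<Phi> v = \<phi> v)"

definition is_der :: "(pi2 \<Rightarrow> pi2) \<Rightarrow> bool" where
  "is_der D \<longleftrightarrow> clinear D \<and>
     (\<forall>x y. D (pi2_mult x y) = pi2_mult (D x) y + pi2_mult x (D y))"

definition local_der :: "(pi2 \<Rightarrow> pi2) \<Rightarrow> bool" where
  "local_der N \<longleftrightarrow> clinear N \<and> (\<forall>x. \<exists>D. is_der D \<and> N x = D x)"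

definition exp_map :: "(pi2 \<Rightarrow> pi2) \<Rightarrow> (pi2 \<Rightarrow> pi2)" where
  "exp_map N = (\<lambda>v. v + (\<Sum>n. (1 / fact (Suc n) :: complex) *s ((N ^^ Suc n) v)))"

end

theory Submission
  imports Defs
begin

text \<open>In a suitable basis the algebra splits into the nilpotent algebras generated by one element
  \<open>g\<^sub>1\<close> with \<open>g\<^sub>1\<^sup>4 = 0\<close> and one element \<open>g\<^sub>4\<close> with \<open>g\<^sub>4\<^sup>3 = 0\<close>. Applying the Leibniz rule,
  resp. multiplicativity, to products of generators shows that every derivation and every automorphism,
  and hence, one value at a time, every local derivation and local automorphism, has a triangular matrix
  with a fixed zero pattern in this basis. Conversely, at any single vector a pattern matrix agrees with
  some derivation, and, if its diagonal is nonzero, with some automorphism. So local derivations are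
  the pattern matrices and local automorphisms the nonsingular ones. The exponential of a pattern
  matrix is again one, with diagonal \<open>exp d\<^sub>i\<close> and off-diagonal entries that are multiples of
  divided differences of \<open>exp\<close> at the \<open>d\<^sub>i\<close>. These do not vanish when the \<open>d\<^sub>i\<close> are principal
  logarithms, so every nonsingular pattern matrix has a logarithm among the pattern matrices.\<close>

text \<open>\<open>pow_divdiff n a b\<close> and \<open>pow_divdiff2 n a b c\<close> are the first and second divided differences
  of \<open>z\<^sup>n\<close>, i.e. the complete homogeneous polynomials of degree \<open>n - 1\<close> and \<open>n - 2\<close>.\<close>

fun pow_divdiff :: "nat \<Rightarrow> 'a::comm_ring_1 \<Rightarrow> 'a \<Rightarrow> 'a" where
  "pow_divdiff 0 a b = 0"
| "pow_divdiff (Suc n) a b = a * pow_divdiff n a b + b ^ n"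

fun pow_divdiff2 :: "nat \<Rightarrow> 'a::comm_ring_1 \<Rightarrow> 'a \<Rightarrow> 'a \<Rightarrow> 'a" where
  "pow_divdiff2 0 a b c = 0"
| "pow_divdiff2 (Suc n) a b c = a * pow_divdiff2 n a b c + pow_divdiff n b c"

lemma pow_divdiff_mult_diff: "pow_divdiff n a b * (a - b) = a ^ n - b ^ n"
proof (induction n)
  case (Suc n)
  have "pow_divdiff (Suc n) a b * (a - b) = a * (pow_divdiff n a b * (a - b)) + b ^ n * (a - b)"
    by (simp add: algebra_simps)
  also have "\<dots> = a ^ Suc n - b ^ Suc n"
    by (simp only: Suc) (simp add: algebra_simps)
  finally show ?case .
qed simp

lemma pow_divdiff_same: "pow_divdiff (Suc n) a a = of_nat (Suc n) * a ^ n"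
  by (induction n) (simp_all add: algebra_simps)

lemma norm_pow_divdiff_le:
  fixes a b :: "'a::real_normed_field"
  assumes "1 \<le> R" "norm a \<le> R" "norm b \<le> R"
  shows "norm (pow_divdiff n a b) \<le> (2 * R) ^ n"
proof (induction n)
  case (Suc n)
  have "norm (pow_divdiff (Suc n) a b) \<le> norm a * norm (pow_divdiff n a b) + norm b ^ n"
    by (simp add: norm_triangle_le norm_mult norm_power)
  also have "\<dots> \<le> R * (2 * R) ^ n + R ^ n"
    using assms Suc by (intro add_mono mult_mono power_mono) auto
  also have "\<dots> \<le> R * (2 * R) ^ n + R * (2 * R) ^ n"
  proof -
    have "R ^ n \<le> (2 * R) ^ n" using assms by (intro power_mono) auto
    also have "\<dots> \<le> R * (2 * R) ^ n" using assms by simp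
    finally show ?thesis by (rule add_left_mono)
  qed
  also have "\<dots> = (2 * R) ^ Suc n"
    by simp
  finally show ?case .
qed simp

lemma norm_pow_divdiff2_le:
  fixes a b c :: "'a::real_normed_field"
  assumes "1 \<le> R" "norm a \<le> R" "norm b \<le> R" "norm c \<le> R"
  shows "norm (pow_divdiff2 n a b c) \<le> (2 * R) ^ n"
proof (induction n)
  case (Suc n)
  have "norm (pow_divdiff2 (Suc n) a b c) \<le>
      norm a * norm (pow_divdiff2 n a b c) + norm (pow_divdiff n b c)"
    by (simp add: norm_triangle_le norm_mult)
  also have "\<dots> \<le> R * (2 * R) ^ n + (2 * R) ^ n"
    using assms Suc norm_pow_divdiff_le[of R b c n] by (intro add_mono mult_mono) auto
  also have "\<dots> \<le> (2 * R) ^ Suc n"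
    using assms by simp
  finally show ?case .
qed simp

lemma summable_divide_fact_if_geometric_bound:
  fixes f :: "nat \<Rightarrow> 'a::{real_normed_field,banach}"
  assumes "\<And>n. norm (f n) \<le> C ^ n"
  shows "summable (\<lambda>n. f n / fact n)"
proof (rule summable_comparison_test)
  show "\<exists>N. \<forall>n\<ge>N. norm (f n / fact n) \<le> C ^ n / fact n"
    using assms by (intro exI[of _ 0] allI impI) (simp add: norm_divide norm_fact divide_right_mono)
  show "summable (\<lambda>n. C ^ n / fact n)"
    using summable_exp[of C] by (simp add: divide_inverse mult.commute)
qed

definition exp_divdiff :: "'a::{real_normed_field,banach} \<Rightarrow> 'a \<Rightarrow> 'a" where
  "exp_divdiff a b = (\<Sum>n. pow_divdiff n a b / fact n)"

definition exp_divdiff2 :: "'a::{real_normed_field,banach} \<Rightarrow> 'a \<Rightarrow> 'a \<Rightarrow> 'a" where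
  "exp_divdiff2 a b c = (\<Sum>n. pow_divdiff2 n a b c / fact n)"

lemma sums_exp_divdiff: "(\<lambda>n. pow_divdiff n a b / fact n) sums exp_divdiff a b"
  unfolding exp_divdiff_def
  by (rule summable_sums, rule summable_divide_fact_if_geometric_bound)
    (rule norm_pow_divdiff_le[where R = "1 + norm a + norm b"], auto)

lemma sums_exp_divdiff2: "(\<lambda>n. pow_divdiff2 n a b c / fact n) sums exp_divdiff2 a b c"
  unfolding exp_divdiff2_def
  by (rule summable_sums, rule summable_divide_fact_if_geometric_bound)
    (rule norm_pow_divdiff2_le[where R = "1 + norm a + norm b + norm c"], auto)

lemma sums_exp_divide_fact:
  fixes z :: "'a::{real_normed_field,banach}"
  shows "(\<lambda>n. z ^ n / fact n) sums exp z"
  using exp_converges[of z] by (simp add: scaleR_conv_of_real divide_inverse mult.commute)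

lemma exp_divdiff_mult_diff: "exp_divdiff a b * (a - b) = exp a - exp b"
proof -
  have "(\<lambda>n. pow_divdiff n a b / fact n * (a - b)) sums (exp_divdiff a b * (a - b))"
    by (rule sums_mult2[OF sums_exp_divdiff])
  moreover have "(\<lambda>n. pow_divdiff n a b / fact n * (a - b)) = (\<lambda>n. a ^ n / fact n - b ^ n / fact n)"
  proof
    fix n
    have "pow_divdiff n a b / fact n * (a - b) = pow_divdiff n a b * (a - b) / fact n" by simp
    then show "pow_divdiff n a b / fact n * (a - b) = a ^ n / fact n - b ^ n / fact n"
      by (simp add: pow_divdiff_mult_diff diff_divide_distrib)
  qed
  ultimately show ?thesis
    using sums_diff[OF sums_exp_divide_fact sums_exp_divide_fact] sums_unique2 by metis
qed

lemma exp_divdiff_same: "exp_divdiff a a = exp a"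
proof -
  have "(\<lambda>n. pow_divdiff (Suc n) a a / fact (Suc n)) sums exp_divdiff a a"
    using sums_Suc_iff[THEN iffD2, of "\<lambda>n. pow_divdiff n a a / fact n"] sums_exp_divdiff[of a a]
    by simp
  moreover have "(\<lambda>n. pow_divdiff (Suc n) a a / fact (Suc n)) = (\<lambda>n. a ^ n / fact n)"
    by (simp add: fun_eq_iff pow_divdiff_same del: of_nat_Suc pow_divdiff.simps)
  ultimately show ?thesis
    using sums_exp_divide_fact sums_unique2 by metis
qed

lemma exp_divdiff_eq_0_iff: "exp_divdiff a b = 0 \<longleftrightarrow> a \<noteq> b \<and> exp a = exp b"
  using exp_divdiff_mult_diff[of a b] by (cases "a = b") (auto simp: exp_divdiff_same)

lemma exhaust_5:
  fixes x :: 5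
  shows "x = 1 \<or> x = 2 \<or> x = 3 \<or> x = 4 \<or> x = 5"
proof (induct x)
  case (of_int z)
  then have "z = 0 \<or> z = 1 \<or> z = 2 \<or> z = 3 \<or> z = 4" by fastforce
  then show ?case by auto
qed

lemma forall_5: "(\<forall>i::5. P i) \<longleftrightarrow> P 1 \<and> P 2 \<and> P 3 \<and> P 4 \<and> P 5"
  by (metis exhaust_5)

definition E :: "5 \<Rightarrow> pi2" where "E k = axis k 1"

lemma E_nth [simp]: "E k $ i = (if i = k then 1 else 0)"
  by (simp add: E_def axis_def)

lemma pi2_mult_nth [simp]:
  "pi2_mult x y $ 1 = 0"
  "pi2_mult x y $ 2 = x$1 * y$1"
  "pi2_mult x y $ 3 = x$1 * y$2 + x$2 * y$1"
  "pi2_mult x y $ 4 = 0"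
  "pi2_mult x y $ 5 = x$1 * y$4 + x$4 * y$1 + x$4 * y$4"
  by (simp_all add: pi2_mult_def)

lemma pi2_mult_E:
  "pi2_mult (E 1) (E 1) = E 2" "pi2_mult (E 1) (E 2) = E 3"
  "pi2_mult (E 4) (E 4) = E 5" "pi2_mult (E 1) (E 4) = E 5"
  "pi2_mult (E 2) (E 4) = 0"
  by (simp_all add: vec_eq_iff forall_5)

lemma clinear_iff:
  "clinear f \<longleftrightarrow> (\<forall>x y. f (x + y) = f x + f y) \<and> (\<forall>c x. f (c *s x) = c *s f x)"
  by (simp add: clinear_def Vector_Spaces.linear_iff vec.vector_space_axioms)

lemma clinear_eq_coords:
  assumes "clinear f"
  shows "f x = x$1 *s f (E 1) + x$2 *s f (E 2) + x$3 *s f (E 3) + x$4 *s f (E 4) + x$5 *s f (E 5)"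
proof -
  have "f (x$1 *s E 1 + x$2 *s E 2 + x$3 *s E 3 + x$4 *s E 4 + x$5 *s E 5) =
      x$1 *s f (E 1) + x$2 *s f (E 2) + x$3 *s f (E 3) + x$4 *s f (E 4) + x$5 *s f (E 5)"
    using assms by (simp add: clinear_iff)
  moreover have "x$1 *s E 1 + x$2 *s E 2 + x$3 *s E 3 + x$4 *s E 4 + x$5 *s E 5 = x"
    by (simp add: vec_eq_iff forall_5)
  ultimately show ?thesis by simp
qed

lemma clinear_diff: "clinear f \<Longrightarrow> f (x - y) = f x - f y"
  unfolding clinear_def by (rule vec.linear_diff)

lemma clinear_0: "clinear f \<Longrightarrow> f 0 = 0"
  unfolding clinear_def by (rule vec.linear_0)

text \<open>In the basis \<open>g\<^sub>1 = e\<^sub>1 - e\<^sub>4, g\<^sub>2 = e\<^sub>2 - e\<^sub>5, g\<^sub>3 = e\<^sub>3, g\<^sub>4 = e\<^sub>4, g\<^sub>5 = e\<^sub>5\<close>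
  the algebra is the direct sum of \<open>span {g\<^sub>1, g\<^sub>2, g\<^sub>3}\<close> and \<open>span {g\<^sub>4, g\<^sub>5}\<close>, with
  \<open>g\<^sub>1\<^sup>2 = g\<^sub>2\<close>, \<open>g\<^sub>1 g\<^sub>2 = g\<^sub>3\<close>, \<open>g\<^sub>4\<^sup>2 = g\<^sub>5\<close> and all other products zero.
  \<open>form_map\<close> is the linear map \<open>g\<^sub>j \<mapsto> d\<^sub>j g\<^sub>j + \<Sum>\<^sub>i a\<^sub>i\<^sub>j g\<^sub>i\<close>; its matrix in this basis is
  triangular (order \<open>g\<^sub>4, g\<^sub>1, g\<^sub>2, g\<^sub>3, g\<^sub>5\<close>). The sums \<open>v$1 + v$4\<close> and \<open>v$2 + v$5\<close> are the
  \<open>g\<^sub>4\<close>- and \<open>g\<^sub>5\<close>-coordinates of \<open>v\<close>.\<close>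

definition form_map :: "complex \<Rightarrow> complex \<Rightarrow> complex \<Rightarrow> complex \<Rightarrow> complex \<Rightarrow>
    complex \<Rightarrow> complex \<Rightarrow> complex \<Rightarrow> complex \<Rightarrow> complex \<Rightarrow> complex \<Rightarrow> pi2 \<Rightarrow> pi2" where
  "form_map d1 d2 d3 d4 d5 a21 a31 a51 a32 a34 a54 v = (\<chi> k.
     if k = 1 then d1 * v$1
     else if k = 2 then a21 * v$1 + d2 * v$2
     else if k = 3 then a31 * v$1 + a32 * v$2 + d3 * v$3 + a34 * (v$1 + v$4)
     else if k = 4 then d4 * (v$1 + v$4) - d1 * v$1
     else a51 * v$1 + a54 * (v$1 + v$4) + d5 * (v$2 + v$5) - a21 * v$1 - d2 * v$2)"

lemma form_map_nth [simp]:
  "form_map d1 d2 d3 d4 d5 a21 a31 a51 a32 a34 a54 v $ 1 = d1 * v$1"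
  "form_map d1 d2 d3 d4 d5 a21 a31 a51 a32 a34 a54 v $ 2 = a21 * v$1 + d2 * v$2"
  "form_map d1 d2 d3 d4 d5 a21 a31 a51 a32 a34 a54 v $ 3 =
     a31 * v$1 + a32 * v$2 + d3 * v$3 + a34 * (v$1 + v$4)"
  "form_map d1 d2 d3 d4 d5 a21 a31 a51 a32 a34 a54 v $ 4 = d4 * (v$1 + v$4) - d1 * v$1"
  "form_map d1 d2 d3 d4 d5 a21 a31 a51 a32 a34 a54 v $ 5 =
     a51 * v$1 + a54 * (v$1 + v$4) + d5 * (v$2 + v$5) - a21 * v$1 - d2 * v$2"
  by (simp_all add: form_map_def)

lemma clinear_form_map: "clinear (form_map d1 d2 d3 d4 d5 a21 a31 a51 a32 a34 a54)"
  unfolding clinear_iff by (simp add: vec_eq_iff forall_5 algebra_simps)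

definition form_maps :: "(pi2 \<Rightarrow> pi2) set" where
  "form_maps = {form_map d1 d2 d3 d4 d5 a21 a31 a51 a32 a34 a54
    | d1 d2 d3 d4 d5 a21 a31 a51 a32 a34 a54. True}"

definition nonsingular_form_maps :: "(pi2 \<Rightarrow> pi2) set" where
  "nonsingular_form_maps = {form_map d1 d2 d3 d4 d5 a21 a31 a51 a32 a34 a54
    | d1 d2 d3 d4 d5 a21 a31 a51 a32 a34 a54. d1 \<noteq> 0 \<and> d2 \<noteq> 0 \<and> d3 \<noteq> 0 \<and> d4 \<noteq> 0 \<and> d5 \<noteq> 0}"

text \<open>A derivation or automorphism is fixed by the images \<open>g\<^sub>1 \<mapsto> s g\<^sub>1 + p g\<^sub>2 + q g\<^sub>3 + m g\<^sub>5\<close>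
  and \<open>g\<^sub>4 \<mapsto> t g\<^sub>4 + r g\<^sub>3 + n g\<^sub>5\<close> of the generators.\<close>

lemma is_der_form_map: "is_der (form_map s (2 * s) (3 * s) t (2 * t) p q m (2 * p) r n)"
  unfolding is_der_def clinear_iff by (simp add: vec_eq_iff forall_5 algebra_simps)

lemma is_aut_form_map:
  assumes "s \<noteq> 0" "t \<noteq> 0"
  shows "is_aut (form_map s (s\<^sup>2) (s ^ 3) t (t\<^sup>2) p q m (2 * s * p) r n)"
proof -
  let ?f = "form_map s (s\<^sup>2) (s ^ 3) t (t\<^sup>2) p q m (2 * s * p) r n"
  have "inj ?f"
  proof (rule injI)
    fix x y assume "?f x = ?f y"
    then have h: "?f x $ k = ?f y $ k" for k by simp
    from h[of 1] assms have 1: "x$1 = y$1" by simp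
    from h[of 4] assms 1 have 4: "x$4 = y$4" by simp
    from h[of 2] assms 1 have 2: "x$2 = y$2" by simp
    from h[of 3] assms 1 2 4 have 3: "x$3 = y$3" by simp
    from h[of 5] assms 1 2 4 have 5: "x$5 = y$5" by simp
    from 1 2 3 4 5 show "x = y" by (simp add: vec_eq_iff forall_5)
  qed
  moreover have "surj ?f"
    using vec.linear_inj_imp_surj \<open>inj ?f\<close> clinear_form_map unfolding clinear_def by blast
  moreover have "?f (pi2_mult x y) = pi2_mult (?f x) (?f y)" for x y
    by (simp add: vec_eq_iff forall_5 algebra_simps power2_eq_square power3_eq_cube)
  ultimately show ?thesis
    using clinear_form_map by (simp add: is_aut_def bij_def)
qed

text \<open>At a single vector \<open>x\<close> only two diagonal entries of a form map are visible (which ones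
  depends on the vanishing coordinates of \<open>x\<close>), and the off-diagonal entries can be solved for even
  with \<open>a\<^sub>3\<^sub>2\<close> tied to \<open>a\<^sub>2\<^sub>1\<close>, as it is for derivations (\<open>c = 2\<close>) and automorphisms (\<open>c = 2 s\<close>).\<close>

lemma ex_form_map_eq_at:
  fixes x :: pi2
  assumes "c \<noteq> 0"
    and "x$1 \<noteq> 0 \<Longrightarrow> e1 = d1 \<and> e4 = d4"
    and "x$1 = 0 \<Longrightarrow> x$4 \<noteq> 0 \<Longrightarrow> e2 = d2 \<and> e4 = d4"
    and "x$1 = 0 \<Longrightarrow> x$4 = 0 \<Longrightarrow> x$2 \<noteq> 0 \<Longrightarrow> e2 = d2 \<and> e5 = d5"
    and "x$1 = 0 \<Longrightarrow> x$4 = 0 \<Longrightarrow> x$2 = 0 \<Longrightarrow> e3 = d3 \<and> e5 = d5"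
  shows "\<exists>p q m r n. form_map e1 e2 e3 e4 e5 p q m (c * p) r n x =
    form_map d1 d2 d3 d4 d5 a21 a31 a51 a32 a34 a54 x"
proof -
  consider "x$1 \<noteq> 0" | "x$1 = 0" "x$4 \<noteq> 0" | "x$1 = 0" "x$4 = 0" "x$2 \<noteq> 0"
    | "x$1 = 0" "x$4 = 0" "x$2 = 0"
    by blast
  then show ?thesis
  proof cases
    case 1
    define p where "p = a21 + (d2 - e2) * x$2 / x$1"
    define q where "q = a31 + ((a32 - c * p) * x$2 + (d3 - e3) * x$3) / x$1"
    define m where "m = a51 + (d5 - e5) * (x$2 + x$5) / x$1"
    have "form_map e1 e2 e3 e4 e5 p q m (c * p) a34 a54 x =
        form_map d1 d2 d3 d4 d5 a21 a31 a51 a32 a34 a54 x"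
      using 1 assms(2) by (simp add: vec_eq_iff forall_5 p_def q_def m_def field_simps)
    then show ?thesis by blast
  next
    case 2
    define r where "r = (a32 * x$2 + (d3 - e3) * x$3 + a34 * x$4) / x$4"
    define n where "n = (a54 * x$4 + (d5 - e5) * (x$2 + x$5)) / x$4"
    have "form_map e1 e2 e3 e4 e5 0 0 0 (c * 0) r n x =
        form_map d1 d2 d3 d4 d5 a21 a31 a51 a32 a34 a54 x"
      using 2 assms(3) by (simp add: vec_eq_iff forall_5 r_def n_def field_simps)
    then show ?thesis by blast
  next
    case 3
    define p where "p = (a32 * x$2 + (d3 - e3) * x$3) / (c * x$2)"
    have "form_map e1 e2 e3 e4 e5 p 0 0 (c * p) 0 0 x =
        form_map d1 d2 d3 d4 d5 a21 a31 a51 a32 a34 a54 x"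
      using 3 assms(1,4) by (simp add: vec_eq_iff forall_5 p_def field_simps)
    then show ?thesis by blast
  next
    case 4
    have "form_map e1 e2 e3 e4 e5 0 0 0 (c * 0) 0 0 x =
        form_map d1 d2 d3 d4 d5 a21 a31 a51 a32 a34 a54 x"
      using 4 assms(5) by (simp add: vec_eq_iff forall_5)
    then show ?thesis by blast
  qed
qed

lemma local_der_form_map: "local_der (form_map d1 d2 d3 d4 d5 a21 a31 a51 a32 a34 a54)"
  unfolding local_der_def
proof (intro conjI allI clinear_form_map)
  fix x :: pi2
  define s where "s = (if x$1 \<noteq> 0 then d1 else if x$4 \<noteq> 0 \<or> x$2 \<noteq> 0 then d2 / 2 else d3 / 3)"
  define t where "t = (if x$1 \<noteq> 0 \<or> x$4 \<noteq> 0 then d4 else d5 / 2)"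
  have "\<exists>p q m r n. form_map s (2 * s) (3 * s) t (2 * t) p q m (2 * p) r n x =
      form_map d1 d2 d3 d4 d5 a21 a31 a51 a32 a34 a54 x"
    by (rule ex_form_map_eq_at) (simp_all add: s_def t_def)
  then obtain p q m r n where
    "form_map s (2 * s) (3 * s) t (2 * t) p q m (2 * p) r n x =
      form_map d1 d2 d3 d4 d5 a21 a31 a51 a32 a34 a54 x"
    by blast
  with is_der_form_map show "\<exists>D. is_der D \<and> form_map d1 d2 d3 d4 d5 a21 a31 a51 a32 a34 a54 x = D x"
    by (metis (no_types))
qed

lemma local_aut_form_map:
  assumes "d1 \<noteq> 0" "d2 \<noteq> 0" "d3 \<noteq> 0" "d4 \<noteq> 0" "d5 \<noteq> 0"
  shows "local_aut (form_map d1 d2 d3 d4 d5 a21 a31 a51 a32 a34 a54)"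
  unfolding local_aut_def
proof (intro conjI allI clinear_form_map)
  fix x :: pi2
  obtain r2 where r2: "r2 \<noteq> 0" "d2 = r2\<^sup>2" using exists_complex_root_nonzero[OF assms(2), of 2] by auto
  obtain r3 where r3: "r3 \<noteq> 0" "d3 = r3 ^ 3" using exists_complex_root_nonzero[OF assms(3), of 3] by auto
  obtain r5 where r5: "r5 \<noteq> 0" "d5 = r5\<^sup>2" using exists_complex_root_nonzero[OF assms(5), of 2] by auto
  define s where "s = (if x$1 \<noteq> 0 then d1 else if x$4 \<noteq> 0 \<or> x$2 \<noteq> 0 then r2 else r3)"
  define t where "t = (if x$1 \<noteq> 0 \<or> x$4 \<noteq> 0 then d4 else r5)"
  have "s \<noteq> 0" "t \<noteq> 0" using assms r2 r3 r5 by (simp_all add: s_def t_def)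
  have "\<exists>p q m r n. form_map s (s\<^sup>2) (s ^ 3) t (t\<^sup>2) p q m (2 * s * p) r n x =
      form_map d1 d2 d3 d4 d5 a21 a31 a51 a32 a34 a54 x"
    by (rule ex_form_map_eq_at) (use \<open>s \<noteq> 0\<close> r2 r3 r5 in \<open>simp_all add: s_def t_def\<close>)
  then obtain p q m r n where
    "form_map s (s\<^sup>2) (s ^ 3) t (t\<^sup>2) p q m (2 * s * p) r n x =
      form_map d1 d2 d3 d4 d5 a21 a31 a51 a32 a34 a54 x"
    by blast
  with is_aut_form_map[OF \<open>s \<noteq> 0\<close> \<open>t \<noteq> 0\<close>]
  show "\<exists>\<phi>. is_aut \<phi> \<and> form_map d1 d2 d3 d4 d5 a21 a31 a51 a32 a34 a54 x = \<phi> x"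
    by (metis (no_types))
qed

text \<open>Each condition involves the value at a single vector, so the conditions pass from derivations and
  automorphisms to local ones; for linear maps they characterise the form maps.\<close>

definition form_constraints :: "(pi2 \<Rightarrow> pi2) \<Rightarrow> bool" where
  "form_constraints f \<longleftrightarrow>
     f (E 2) $ 1 = 0 \<and> f (E 2) $ 4 = 0 \<and>
     f (E 3) $ 1 = 0 \<and> f (E 3) $ 2 = 0 \<and> f (E 3) $ 4 = 0 \<and> f (E 3) $ 5 = 0 \<and>
     f (E 4) $ 1 = 0 \<and> f (E 4) $ 2 = 0 \<and>
     f (E 5) $ 1 = 0 \<and> f (E 5) $ 2 = 0 \<and> f (E 5) $ 3 = 0 \<and> f (E 5) $ 4 = 0 \<and>
     f (E 1 - E 4) $ 4 = - f (E 1 - E 4) $ 1 \<and>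
     f (E 2 - E 5) $ 5 = - f (E 2 - E 5) $ 2"

lemma form_constraints_pointwise:
  assumes "\<And>x. \<exists>g. form_constraints g \<and> f x = g x"
  shows "form_constraints f"
proof -
  have "P (f w)" if "\<And>g. form_constraints g \<Longrightarrow> P (g w)" for P w
    using assms[of w] that by auto
  from this[of "\<lambda>y. y $ 1 = 0 \<and> y $ 4 = 0" "E 2"]
    this[of "\<lambda>y. y $ 1 = 0 \<and> y $ 2 = 0 \<and> y $ 4 = 0 \<and> y $ 5 = 0" "E 3"]
    this[of "\<lambda>y. y $ 1 = 0 \<and> y $ 2 = 0" "E 4"]
    this[of "\<lambda>y. y $ 1 = 0 \<and> y $ 2 = 0 \<and> y $ 3 = 0 \<and> y $ 4 = 0" "E 5"]
    this[of "\<lambda>y. y $ 4 = - y $ 1" "E 1 - E 4"] this[of "\<lambda>y. y $ 5 = - y $ 2" "E 2 - E 5"]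
  show ?thesis unfolding form_constraints_def by blast
qed

lemma form_map_of_constraints:
  assumes "clinear f" "form_constraints f"
  shows "f = form_map (f (E 1) $ 1) (f (E 2) $ 2) (f (E 3) $ 3) (f (E 4) $ 4) (f (E 5) $ 5)
     (f (E 1) $ 2) (f (E 1) $ 3 - f (E 4) $ 3) (f (E 1) $ 5 - f (E 4) $ 5 + f (E 1) $ 2)
     (f (E 2) $ 3) (f (E 4) $ 3) (f (E 4) $ 5)"
proof
  fix v
  from assms have "f (E 4) $ 4 = f (E 1) $ 1 + f (E 1) $ 4" "f (E 5) $ 5 = f (E 2) $ 2 + f (E 2) $ 5"
    by (simp_all add: form_constraints_def clinear_diff algebra_simps)
  with assms show "f v = form_map (f (E 1) $ 1) (f (E 2) $ 2) (f (E 3) $ 3) (f (E 4) $ 4) (f (E 5) $ 5)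
     (f (E 1) $ 2) (f (E 1) $ 3 - f (E 4) $ 3) (f (E 1) $ 5 - f (E 4) $ 5 + f (E 1) $ 2)
     (f (E 2) $ 3) (f (E 4) $ 3) (f (E 4) $ 5) v"
    by (subst clinear_eq_coords) (simp_all add: form_constraints_def vec_eq_iff forall_5 algebra_simps)
qed

lemma is_der_form_constraints:
  assumes "is_der D"
  shows "form_constraints D"
proof -
  have lin: "clinear D" and leibniz: "\<And>x y. D (pi2_mult x y) = pi2_mult (D x) y + pi2_mult x (D y)"
    using assms unfolding is_der_def by auto
  have D2: "D (E 2) = pi2_mult (D (E 1)) (E 1) + pi2_mult (E 1) (D (E 1))"
    using leibniz[of "E 1" "E 1"] by (simp add: pi2_mult_E)
  have D3: "D (E 3) = pi2_mult (D (E 1)) (E 2) + pi2_mult (E 1) (D (E 2))"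
    using leibniz[of "E 1" "E 2"] by (simp add: pi2_mult_E)
  have D5: "D (E 5) = pi2_mult (D (E 4)) (E 4) + pi2_mult (E 4) (D (E 4))"
    using leibniz[of "E 4" "E 4"] by (simp add: pi2_mult_E)
  have D5': "D (E 5) = pi2_mult (D (E 1)) (E 4) + pi2_mult (E 1) (D (E 4))"
    using leibniz[of "E 1" "E 4"] by (simp add: pi2_mult_E)
  have "(pi2_mult (D (E 4)) (E 4) + pi2_mult (E 4) (D (E 4))) $ k =
      (pi2_mult (D (E 1)) (E 4) + pi2_mult (E 1) (D (E 4))) $ k" for k
    using D5 D5' by simp
  from this[of 2] this[of 3] this[of 5]
  have "D (E 4) $ 1 = 0" "D (E 4) $ 2 = 0" "D (E 4) $ 4 = D (E 1) $ 1 + D (E 1) $ 4"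
    by simp_all
  with D2 D3 D5 show ?thesis
    by (simp add: form_constraints_def clinear_diff[OF lin])
qed

lemma is_aut_E_images:
  assumes "is_aut \<phi>"
  shows "\<phi> (E 2) = pi2_mult (\<phi> (E 1)) (\<phi> (E 1))" "\<phi> (E 3) = pi2_mult (\<phi> (E 1)) (\<phi> (E 2))"
    "\<phi> (E 5) = pi2_mult (\<phi> (E 4)) (\<phi> (E 4))" "\<phi> (E 5) = pi2_mult (\<phi> (E 1)) (\<phi> (E 4))"
    "pi2_mult (\<phi> (E 2)) (\<phi> (E 4)) = 0"
  using assms clinear_0[of \<phi>] unfolding is_aut_def by (metis pi2_mult_E)+

lemma is_aut_nonzero_E:
  assumes "is_aut \<phi>"
  shows "\<phi> (E j) \<noteq> 0"
proof
  assume "\<phi> (E j) = 0"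
  with assms have "E j = 0"
    unfolding is_aut_def bij_def by (metis clinear_0 injD)
  then show False by (metis E_nth zero_index one_neq_zero)
qed

lemma is_aut_generator_images:
  assumes "is_aut \<phi>"
  shows "\<phi> (E 1) $ 1 \<noteq> 0" "\<phi> (E 4) $ 1 = 0" "\<phi> (E 4) $ 2 = 0"
    "\<phi> (E 4) $ 4 = \<phi> (E 1) $ 1 + \<phi> (E 1) $ 4" "\<phi> (E 4) $ 4 \<noteq> 0"
proof -
  note P = is_aut_E_images[OF assms] and nz = is_aut_nonzero_E[OF assms]
  show x1: "\<phi> (E 1) $ 1 \<noteq> 0"
  proof
    assume "\<phi> (E 1) $ 1 = 0"
    then have "\<phi> (E 3) = 0" unfolding P(1,2) by (simp add: vec_eq_iff forall_5)
    with nz show False by blast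
  qed
  have "pi2_mult (\<phi> (E 2)) (\<phi> (E 4)) $ 3 = 0" using P(5) by simp
  with x1 show y1: "\<phi> (E 4) $ 1 = 0" unfolding P(1) by simp
  have P5: "pi2_mult (\<phi> (E 4)) (\<phi> (E 4)) $ k = pi2_mult (\<phi> (E 1)) (\<phi> (E 4)) $ k" for k
    using P(3,4) by simp
  from P5[of 3] y1 x1 show "\<phi> (E 4) $ 2 = 0" by simp
  show y4: "\<phi> (E 4) $ 4 \<noteq> 0"
  proof
    assume "\<phi> (E 4) $ 4 = 0"
    then have "\<phi> (E 5) = 0" unfolding P(3) using y1 by (simp add: vec_eq_iff forall_5)
    with nz show False by blast
  qed
  from P5[of 5] y1 have "\<phi> (E 4) $ 4 * \<phi> (E 4) $ 4 = (\<phi> (E 1) $ 1 + \<phi> (E 1) $ 4) * \<phi> (E 4) $ 4"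
    by (simp add: algebra_simps)
  with y4 show "\<phi> (E 4) $ 4 = \<phi> (E 1) $ 1 + \<phi> (E 1) $ 4" by simp
qed

lemma is_aut_form_constraints:
  assumes "is_aut \<phi>"
  shows "form_constraints \<phi>" and "\<phi> (E k) $ k \<noteq> 0"
proof -
  note P = is_aut_E_images[OF assms] and gen = is_aut_generator_images[OF assms]
  have lin: "clinear \<phi>" using assms by (simp add: is_aut_def)
  show "form_constraints \<phi>"
    using gen P(1-3) by (simp add: form_constraints_def clinear_diff[OF lin] algebra_simps)
  show "\<phi> (E k) $ k \<noteq> 0"
    using exhaust_5[of k] gen P(1-3) by auto
qed

lemma local_der_iff_form_maps: "local_der N \<longleftrightarrow> N \<in> form_maps"
proof
  assume N: "local_der N"
  then have "form_constraints N"
    by (intro form_constraints_pointwise) (metis local_der_def is_der_form_constraints)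
  with N have "N = form_map (N (E 1) $ 1) (N (E 2) $ 2) (N (E 3) $ 3) (N (E 4) $ 4) (N (E 5) $ 5)
      (N (E 1) $ 2) (N (E 1) $ 3 - N (E 4) $ 3) (N (E 1) $ 5 - N (E 4) $ 5 + N (E 1) $ 2)
      (N (E 2) $ 3) (N (E 4) $ 3) (N (E 4) $ 5)"
    unfolding local_der_def by (blast intro: form_map_of_constraints)
  then show "N \<in> form_maps" unfolding form_maps_def by blast
next
  assume "N \<in> form_maps"
  then show "local_der N" unfolding form_maps_def by (auto intro: local_der_form_map)
qed

lemma local_aut_iff_nonsingular_form_maps: "local_aut \<Phi> \<longleftrightarrow> \<Phi> \<in> nonsingular_form_maps"
proof
  assume \<Phi>: "local_aut \<Phi>"
  then have "form_constraints \<Phi>"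
    by (intro form_constraints_pointwise) (metis local_aut_def is_aut_form_constraints(1))
  with \<Phi> have "\<Phi> = form_map (\<Phi> (E 1) $ 1) (\<Phi> (E 2) $ 2) (\<Phi> (E 3) $ 3) (\<Phi> (E 4) $ 4) (\<Phi> (E 5) $ 5)
      (\<Phi> (E 1) $ 2) (\<Phi> (E 1) $ 3 - \<Phi> (E 4) $ 3) (\<Phi> (E 1) $ 5 - \<Phi> (E 4) $ 5 + \<Phi> (E 1) $ 2)
      (\<Phi> (E 2) $ 3) (\<Phi> (E 4) $ 3) (\<Phi> (E 4) $ 5)"
    unfolding local_aut_def by (blast intro: form_map_of_constraints)
  moreover have "\<Phi> (E k) $ k \<noteq> 0" for k
    using \<Phi> unfolding local_aut_def by (metis is_aut_form_constraints(2))
  ultimately show "\<Phi> \<in> nonsingular_form_maps"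
    unfolding nonsingular_form_maps_def by blast
next
  assume "\<Phi> \<in> nonsingular_form_maps"
  then show "local_aut \<Phi>" unfolding nonsingular_form_maps_def by (auto intro: local_aut_form_map)
qed

lemma form_map_funpow:
  "form_map d1 d2 d3 d4 d5 a21 a31 a51 a32 a34 a54 ^^ n =
   form_map (d1 ^ n) (d2 ^ n) (d3 ^ n) (d4 ^ n) (d5 ^ n) (a21 * pow_divdiff n d2 d1)
     (a31 * pow_divdiff n d3 d1 + a32 * a21 * pow_divdiff2 n d3 d2 d1) (a51 * pow_divdiff n d5 d1)
     (a32 * pow_divdiff n d3 d2) (a34 * pow_divdiff n d3 d4) (a54 * pow_divdiff n d5 d4)"
  by (induction n) (simp_all add: fun_eq_iff vec_eq_iff forall_5 algebra_simps)

lemma form_map_sums: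
  assumes "D1 sums d1" "D2 sums d2" "D3 sums d3" "D4 sums d4" "D5 sums d5"
    "A21 sums a21" "A31 sums a31" "A51 sums a51" "A32 sums a32" "A34 sums a34" "A54 sums a54"
  shows "(\<lambda>n. form_map (D1 n) (D2 n) (D3 n) (D4 n) (D5 n) (A21 n) (A31 n) (A51 n) (A32 n) (A34 n) (A54 n) v)
     sums form_map d1 d2 d3 d4 d5 a21 a31 a51 a32 a34 a54 v"
  unfolding sums_def
proof (rule vec_tendstoI)
  fix k :: 5
  show "((\<lambda>n. (\<Sum>i<n. form_map (D1 i) (D2 i) (D3 i) (D4 i) (D5 i) (A21 i) (A31 i) (A51 i) (A32 i)
      (A34 i) (A54 i) v) $ k) \<longlongrightarrow> form_map d1 d2 d3 d4 d5 a21 a31 a51 a32 a34 a54 v $ k) sequentially"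
    using exhaust_5[of k] unfolding sum_component sums_def[symmetric]
    by (auto intro!: sums_add sums_diff sums_mult2 assms)
qed

lemma exp_map_eqI:
  assumes "(\<lambda>n. (1 / fact n :: complex) *s (N ^^ n) v) sums w"
  shows "exp_map N v = w"
proof -
  have "(\<lambda>n. (1 / fact (Suc n) :: complex) *s (N ^^ Suc n) v) sums (w - v)"
    using assms sums_Suc_iff[of "\<lambda>n. (1 / fact n :: complex) *s (N ^^ n) v" "w - v"] by simp
  then show ?thesis
    unfolding exp_map_def by (simp add: sums_unique[symmetric])
qed

text \<open>As for any triangular matrix, the entries of the exponential are divided differences of \<open>exp\<close>
  at the diagonal; the second divided difference comes from the only path \<open>g\<^sub>1 \<rightarrow> g\<^sub>2 \<rightarrow> g\<^sub>3\<close>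
  of length two in the pattern.\<close>

lemma exp_map_form_map:
  "exp_map (form_map d1 d2 d3 d4 d5 a21 a31 a51 a32 a34 a54) =
   form_map (exp d1) (exp d2) (exp d3) (exp d4) (exp d5) (a21 * exp_divdiff d2 d1)
     (a31 * exp_divdiff d3 d1 + a32 * a21 * exp_divdiff2 d3 d2 d1) (a51 * exp_divdiff d5 d1)
     (a32 * exp_divdiff d3 d2) (a34 * exp_divdiff d3 d4) (a54 * exp_divdiff d5 d4)"
proof (rule ext, rule exp_map_eqI)
  fix v
  have "(\<lambda>n. (1 / fact n :: complex) *s (form_map d1 d2 d3 d4 d5 a21 a31 a51 a32 a34 a54 ^^ n) v) =
    (\<lambda>n. form_map (d1 ^ n / fact n) (d2 ^ n / fact n) (d3 ^ n / fact n) (d4 ^ n / fact n) (d5 ^ n / fact n)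
      (a21 * (pow_divdiff n d2 d1 / fact n))
      (a31 * (pow_divdiff n d3 d1 / fact n) + a32 * a21 * (pow_divdiff2 n d3 d2 d1 / fact n))
      (a51 * (pow_divdiff n d5 d1 / fact n)) (a32 * (pow_divdiff n d3 d2 / fact n))
      (a34 * (pow_divdiff n d3 d4 / fact n)) (a54 * (pow_divdiff n d5 d4 / fact n)) v)"
    by (simp add: form_map_funpow fun_eq_iff vec_eq_iff forall_5 field_simps)
  also have "\<dots> sums form_map (exp d1) (exp d2) (exp d3) (exp d4) (exp d5) (a21 * exp_divdiff d2 d1)
     (a31 * exp_divdiff d3 d1 + a32 * a21 * exp_divdiff2 d3 d2 d1) (a51 * exp_divdiff d5 d1)
     (a32 * exp_divdiff d3 d2) (a34 * exp_divdiff d3 d4) (a54 * exp_divdiff d5 d4) v"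
    by (intro form_map_sums sums_add sums_mult sums_exp_divide_fact sums_exp_divdiff sums_exp_divdiff2)
  finally show "(\<lambda>n. (1 / fact n :: complex) *s (form_map d1 d2 d3 d4 d5 a21 a31 a51 a32 a34 a54 ^^ n) v)
    sums \<dots>" .
qed

lemma exp_map_image_form_maps: "exp_map ` form_maps = nonsingular_form_maps"
proof
  show "exp_map ` form_maps \<subseteq> nonsingular_form_maps"
  proof
    fix \<Phi> assume "\<Phi> \<in> exp_map ` form_maps"
    then obtain d1 d2 d3 d4 d5 a21 a31 a51 a32 a34 a54
      where "\<Phi> = exp_map (form_map d1 d2 d3 d4 d5 a21 a31 a51 a32 a34 a54)"
      unfolding form_maps_def by blast
    then show "\<Phi> \<in> nonsingular_form_maps"
      unfolding nonsingular_form_maps_def exp_map_form_map using exp_not_eq_zero by blast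
  qed
next
  show "nonsingular_form_maps \<subseteq> exp_map ` form_maps"
  proof
    fix \<Phi> assume "\<Phi> \<in> nonsingular_form_maps"
    then obtain D1 D2 D3 D4 D5 A21 A31 A51 A32 A34 A54
      where \<Phi>: "\<Phi> = form_map D1 D2 D3 D4 D5 A21 A31 A51 A32 A34 A54"
        and nz: "D1 \<noteq> 0" "D2 \<noteq> 0" "D3 \<noteq> 0" "D4 \<noteq> 0" "D5 \<noteq> 0"
      unfolding nonsingular_form_maps_def by blast
    define d1 d2 d3 d4 d5 where "d1 = Ln D1" and "d2 = Ln D2" and "d3 = Ln D3" and "d4 = Ln D4"
      and "d5 = Ln D5"
    define a21 a32 a51 a34 a54 a31
      where "a21 = A21 / exp_divdiff d2 d1" and "a32 = A32 / exp_divdiff d3 d2"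
      and "a51 = A51 / exp_divdiff d5 d1" and "a34 = A34 / exp_divdiff d3 d4"
      and "a54 = A54 / exp_divdiff d5 d4"
      and "a31 = (A31 - a32 * a21 * exp_divdiff2 d3 d2 d1) / exp_divdiff d3 d1"
    have divdiff_nz: "exp_divdiff (Ln x) (Ln y) \<noteq> 0" if "x \<noteq> 0" "y \<noteq> 0" for x y
      using that by (auto simp: exp_divdiff_eq_0_iff)
    have "\<Phi> = exp_map (form_map d1 d2 d3 d4 d5 a21 a31 a51 a32 a34 a54)"
      unfolding \<Phi> exp_map_form_map using nz
      by (simp add: d1_def d2_def d3_def d4_def d5_def a21_def a31_def a51_def a32_def a34_def a54_def
          divdiff_nz)
    then show "\<Phi> \<in> exp_map ` form_maps"
      unfolding form_maps_def by blast
  qed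
qed

theorem theorem7p3:
  shows "{\<Phi>. local_aut \<Phi>} = {exp_map N | N. local_der N}"
proof -
  have "{exp_map N | N. local_der N} = exp_map ` form_maps"
    by (auto simp: local_der_iff_form_maps)
  also have "\<dots> = nonsingular_form_maps"
    by (rule exp_map_image_form_maps)
  also have "\<dots> = {\<Phi>. local_aut \<Phi>}"
    by (auto simp: local_aut_iff_nonsingular_form_maps)
  finally show ?thesis
    by (rule sym)
qed

end
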